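(* Let $G$ be a graph on $n'\geq n$ vertices and let $H\subseteq G$ be a complete subgraph $H\cong K_n$. Consider a game on $E(G)$ in which Red and Blue alternately claim previously unclaimed edges, one per turn, and suppose that at the moment Red starts claiming edges there is a vertex $v\in V(H)$ with $d_B(v)\geq 1$, but Blue has claimed at most one edge of $E(H)$. Then Red can ensure that, for all $1\leq j\leq n/2-1$, immediately after her $j$-th move her graph (within $H$) is a matching consisting of $j$ edges and $D_j\leq 1$. Moreover, if $D_k=1$ for some $1\leq k\leq n/2-1$, then $D_j=1$ for all $k\leq j\leq n/2-1$.
   Context: $R$ and $B$ denote the graphs formed by the edges claimed so far by Red and Blue respectively; $d_B(v)$ is the degree of $v$ in $B$. For $v\in V(H)$, $d_B^H(v)$ (resp. $d_R^H(v)$) is the number of Blue (resp. Red) edges joining $v$ to other vertices of $H$. A vertex $v\in V(H)$ is H-distinct if $d_B^H(v)\geq 1$ and $d_R^H(v)=0$. $D_j$ denotes the number of H-distinct vertices immediately after Red's $j$-th move. *)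

theory Defs
  imports Complex_Main
begin

definition edges_of :: "'a set \<Rightarrow> 'a set set" where
  "edges_of H = {e. \<exists>x y. x \<in> H \<and> y \<in> H \<and> x \<noteq> y \<and> e = {x, y}}"

definition simple_graph :: "'a set \<Rightarrow> 'a set set \<Rightarrow> bool" where
  "simple_graph V E \<longleftrightarrow> finite V \<and> E \<subseteq> edges_of V"

definition is_matching :: "'a set set \<Rightarrow> bool" where
  "is_matching M \<longleftrightarrow> (\<forall>e\<in>M. \<forall>f\<in>M. e \<noteq> f \<longrightarrow> e \<inter> f = {})"

text \<open>A play is a list of moves; moves at even positions (0,2,4,...) are Red's,
  moves at odd positions are Blue's. Red starts with no edges; Blue starts with B0.\<close>
definition red_after :: "'a set list \<Rightarrow> nat \<Rightarrow> 'a set set" where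
  "red_after ms k = {ms ! i | i. i < k \<and> i < length ms \<and> even i}"

definition blue_after :: "'a set set \<Rightarrow> 'a set list \<Rightarrow> nat \<Rightarrow> 'a set set" where
  "blue_after B0 ms k = B0 \<union> {ms ! i | i. i < k \<and> i < length ms \<and> odd i}"

definition legal_move :: "'a set set \<Rightarrow> 'a set set \<Rightarrow> 'a set list \<Rightarrow> nat \<Rightarrow> bool" where
  "legal_move E B0 ms i \<longleftrightarrow> i < length ms \<and> ms ! i \<in> E \<and> ms ! i \<notin> B0 \<and> ms ! i \<notin> set (take i ms)"

definition deg_in :: "'a set \<Rightarrow> 'a set set \<Rightarrow> 'a \<Rightarrow> nat" where
  "deg_in H F v = card {e \<in> F. v \<in> e \<and> e \<in> edges_of H}"

definition H_distinct :: "'a set \<Rightarrow> 'a set set \<Rightarrow> 'a set set \<Rightarrow> 'a \<Rightarrow> bool" where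
  "H_distinct H R B v \<longleftrightarrow> v \<in> H \<and> deg_in H B v \<ge> 1 \<and> deg_in H R v = 0"

text \<open>D_j: number of H-distinct vertices immediately after Red's j-th move
  (i.e. after the first 2j-1 moves of the play).\<close>
definition D :: "'a set \<Rightarrow> 'a set set \<Rightarrow> 'a set list \<Rightarrow> nat \<Rightarrow> nat" where
  "D H B0 ms j = card {v. H_distinct H (red_after ms (2*j - 1)) (blue_after B0 ms (2*j - 1)) v}"

end

theory Submission imports Defs begin

text \<open>Let S be the set of H-distinct vertices. Red keeps the invariant that before each of
  her moves |S| \<le> 3 and Blue owns at most one edge inside S. While 2k + 4 \<le> n, at least four
  vertices of H avoid her k-edge matching, and she claims an edge among them that leaves at most
  one H-distinct vertex: two vertices of S not joined by a Blue edge if |S| = 3, and otherwise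
  ends outside S as needed, whose edges cannot be Blue since they are untouched in H. Blue's
  reply adds at most two H-distinct vertices and cannot create a second Blue edge inside S,
  because such an edge would join two vertices of the old S, which had at most one element.
  Blue never destroys H-distinct vertices and Red leaves min(|S|, 1) of them, so once D_k = 1 it
  stays 1.\<close>

lemma finite_edges_of: "finite H \<Longrightarrow> finite (edges_of H)"
  by (rule finite_subset[of _ "Pow H"]) (auto simp: edges_of_def)

lemma edges_of_mono: "S \<subseteq> H \<Longrightarrow> edges_of S \<subseteq> edges_of H"
  by (auto simp: edges_of_def)

lemma doubleton_in_edges_of: "x \<in> H \<Longrightarrow> y \<in> H \<Longrightarrow> x \<noteq> y \<Longrightarrow> {x, y} \<in> edges_of H"
  by (auto simp: edges_of_def)

lemma card_edge: "e \<in> edges_of H \<Longrightarrow> card e = 2"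
  by (auto simp: edges_of_def)

lemma edge_subset: "e \<in> edges_of H \<Longrightarrow> e \<subseteq> H"
  by (auto simp: edges_of_def)

lemma card_Union_edges_le: "X \<subseteq> edges_of H \<Longrightarrow> card (\<Union>X) \<le> 2 * card X"
proof -
  assume X: "X \<subseteq> edges_of H"
  have "card (\<Union>X) \<le> (\<Sum>e\<in>X. card e)" by (rule card_Union_le_sum_card)
  also have "\<dots> = (\<Sum>e\<in>X. 2)" using X card_edge by (intro sum.cong) auto
  finally show ?thesis by simp
qed

lemma is_matching_insert:
  "is_matching M \<Longrightarrow> (\<And>f. f \<in> M \<Longrightarrow> e \<inter> f = {}) \<Longrightarrow> is_matching (insert e M)"
  unfolding is_matching_def by blast

definition distinct_vertices :: "'a set \<Rightarrow> 'a set set \<Rightarrow> 'a set set \<Rightarrow> 'a set" where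
  "distinct_vertices H R B = {v. H_distinct H R B v}"

lemma mem_distinct_vertices_iff:
  assumes "finite H"
  shows "v \<in> distinct_vertices H R B \<longleftrightarrow>
    v \<in> H \<and> (\<exists>e\<in>B \<inter> edges_of H. v \<in> e) \<and> (\<forall>e\<in>R \<inter> edges_of H. v \<notin> e)"
proof -
  have fin: "finite {e \<in> F. v \<in> e \<and> e \<in> edges_of H}" for F
    using finite_edges_of[OF assms] by (rule finite_subset[rotated]) auto
  show ?thesis
    unfolding distinct_vertices_def H_distinct_def deg_in_def
    using fin[of B] fin[of R] by (auto simp: Suc_le_eq card_gt_0_iff)
qed

lemma distinct_vertices_subset: "finite H \<Longrightarrow> distinct_vertices H R B \<subseteq> H"
  by (auto simp: mem_distinct_vertices_iff)

lemma finite_distinct_vertices: "finite H \<Longrightarrow> finite (distinct_vertices H R B)"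
  by (rule finite_subset[OF distinct_vertices_subset])

lemma distinct_vertices_insert_red:
  "finite H \<Longrightarrow> e \<in> edges_of H \<Longrightarrow>
    distinct_vertices H (insert e R) B = distinct_vertices H R B - e"
  by (auto simp: mem_distinct_vertices_iff)

lemma distinct_vertices_mono_blue:
  "finite H \<Longrightarrow> distinct_vertices H R B \<subseteq> distinct_vertices H R (insert f B)"
  by (auto simp: mem_distinct_vertices_iff)

lemma card_distinct_vertices_insert_blue_le:
  assumes "finite H"
  shows "card (distinct_vertices H R (insert f B)) \<le> card (distinct_vertices H R B) + 2"
proof (cases "f \<in> edges_of H")
  case True
  have "distinct_vertices H R (insert f B) \<subseteq> distinct_vertices H R B \<union> f"
    using assms by (auto simp: mem_distinct_vertices_iff)
  hence "card (distinct_vertices H R (insert f B)) \<le> card (distinct_vertices H R B \<union> f)"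
    using assms finite_distinct_vertices finite_subset[OF edge_subset[OF True]]
    by (intro card_mono) auto
  also have "\<dots> \<le> card (distinct_vertices H R B) + card f" by (rule card_Un_le)
  finally show ?thesis using card_edge[OF True] by simp
next
  case False
  hence "distinct_vertices H R (insert f B) = distinct_vertices H R B"
    using assms by (auto simp: mem_distinct_vertices_iff)
  thus ?thesis by simp
qed

lemma blue_edges_in_distinct_vertices_insert:
  assumes fin: "finite H" and small: "card (distinct_vertices H R B) \<le> 1"
  shows "insert f B \<inter> edges_of (distinct_vertices H R (insert f B)) \<subseteq> {f}"
proof
  fix g assume g: "g \<in> insert f B \<inter> edges_of (distinct_vertices H R (insert f B))"
  show "g \<in> {f}"
  proof (rule ccontr)
    assume "g \<notin> {f}"
    with g have "g \<in> B" by blast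
    from g obtain x y where xy: "x \<noteq> y" "g = {x, y}"
      "x \<in> distinct_vertices H R (insert f B)" "y \<in> distinct_vertices H R (insert f B)"
      unfolding edges_of_def by blast
    with fin have "g \<in> edges_of H"
      by (auto simp: mem_distinct_vertices_iff intro: doubleton_in_edges_of)
    with \<open>g \<in> B\<close> xy fin have "{x, y} \<subseteq> distinct_vertices H R B"
      by (auto simp: mem_distinct_vertices_iff)
    hence "card {x, y} \<le> card (distinct_vertices H R B)"
      using fin finite_distinct_vertices by (intro card_mono) auto
    with xy small show False by simp
  qed
qed

definition red_move_invariant :: "'a set \<Rightarrow> 'a set set \<Rightarrow> 'a set set \<Rightarrow> nat \<Rightarrow> bool" where
  "red_move_invariant H R B k \<longleftrightarrow> R \<subseteq> edges_of H \<and> is_matching R \<and> card R = k \<and>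
     card (distinct_vertices H R B) \<le> 3 \<and> card (B \<inter> edges_of (distinct_vertices H R B)) \<le> 1"

lemma red_move_invariant_initial:
  assumes fin: "finite H" and blue: "card (B \<inter> edges_of H) \<le> 1"
  shows "red_move_invariant H {} B 0"
proof -
  have "distinct_vertices H {} B \<subseteq> \<Union>(B \<inter> edges_of H)"
    using fin by (auto simp: mem_distinct_vertices_iff)
  hence "card (distinct_vertices H {} B) \<le> card (\<Union>(B \<inter> edges_of H))"
    using fin finite_subset[OF edge_subset fin] finite_edges_of[OF fin] by (intro card_mono) auto
  also have "\<dots> \<le> 2 * card (B \<inter> edges_of H)" by (rule card_Union_edges_le) blast
  finally have "card (distinct_vertices H {} B) \<le> 3" using blue by linarith
  moreover have "card (B \<inter> edges_of (distinct_vertices H {} B)) \<le> card (B \<inter> edges_of H)"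
    using fin finite_edges_of edges_of_mono[OF distinct_vertices_subset]
    by (intro card_mono) blast+
  ultimately show ?thesis
    using blue by (simp add: red_move_invariant_def is_matching_def)
qed

lemma red_move_invariant_after_blue:
  assumes fin: "finite H" and R: "R \<subseteq> edges_of H" "is_matching R" "card R = k"
    and small: "card (distinct_vertices H R B) \<le> 1"
  shows "red_move_invariant H R (insert f B) k"
proof -
  have "card (insert f B \<inter> edges_of (distinct_vertices H R (insert f B))) \<le> card {f}"
    using blue_edges_in_distinct_vertices_insert[OF fin small] by (intro card_mono) auto
  thus ?thesis
    using R small card_distinct_vertices_insert_blue_le[OF fin, of R f B]
    by (simp add: red_move_invariant_def)
qed

definition safe_red_edge :: "'a set \<Rightarrow> 'a set set \<Rightarrow> 'a set set \<Rightarrow> 'a set \<Rightarrow> bool" where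
  "safe_red_edge H R B e \<longleftrightarrow> (\<exists>x y. x \<in> H - \<Union>R \<and> y \<in> H - \<Union>R \<and> x \<noteq> y \<and> e = {x, y} \<and>
     e \<notin> B \<and> card (distinct_vertices H R B - e) = min (card (distinct_vertices H R B)) 1)"

lemma exists_pair_notin_of_card_3:
  assumes S: "card S = 3" and B: "card (B \<inter> edges_of S) \<le> 1"
  shows "\<exists>x\<in>S. \<exists>y\<in>S. x \<noteq> y \<and> {x, y} \<notin> B"
proof -
  obtain a b c where abc: "S = {a, b, c}" "a \<noteq> b" "b \<noteq> c" "a \<noteq> c"
    using S by (auto simp: card_3_iff)
  have "\<not> ({a, b} \<in> B \<and> {a, c} \<in> B)"
  proof
    assume "{a, b} \<in> B \<and> {a, c} \<in> B"
    hence "{{a, b}, {a, c}} \<subseteq> B \<inter> edges_of S"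
      using abc by (auto intro: doubleton_in_edges_of)
    hence "card {{a, b}, {a, c}} \<le> card (B \<inter> edges_of S)"
      using abc finite_edges_of[of S] by (intro card_mono) auto
    with abc B show False by (simp add: doubleton_eq_iff)
  qed
  thus ?thesis using abc by blast
qed

lemma doubleton_notin_blue:
  assumes "finite H" "R \<subseteq> edges_of H" "z \<in> H - \<Union>R - distinct_vertices H R B"
    and "x \<in> H" "x \<noteq> z"
  shows "{x, z} \<notin> B"
  using assms by (auto simp: mem_distinct_vertices_iff intro: doubleton_in_edges_of)

lemma safe_red_edge_exists:
  assumes fin: "finite H" and inv: "red_move_invariant H R B k" and big: "2 * k + 4 \<le> card H"
  shows "\<exists>e. safe_red_edge H R B e"
proof -
  define S where "S = distinct_vertices H R B"
  define U where "U = H - \<Union>R"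
  have R: "R \<subseteq> edges_of H" and "card R = k" and S3: "card S \<le> 3"
    and SB: "card (B \<inter> edges_of S) \<le> 1"
    using inv by (simp_all add: red_move_invariant_def S_def)
  have "\<Union>R \<subseteq> H" using R edge_subset by blast
  moreover have "card (\<Union>R) \<le> 2 * k" using card_Union_edges_le[OF R] \<open>card R = k\<close> by simp
  ultimately have "card U \<ge> 4"
    using big card_Diff_subset[OF finite_subset[OF _ fin]] unfolding U_def by fastforce
  have finS: "finite S" unfolding S_def using finite_distinct_vertices[OF fin] .
  have SU: "S \<subseteq> U" unfolding S_def U_def using fin R by (auto simp: mem_distinct_vertices_iff)
  hence "card (U - S) \<ge> 4 - card S" using card_Diff_subset[OF finS] \<open>card U \<ge> 4\<close> by fastforce
  have safeI: "\<exists>e. safe_red_edge H R B e"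
    if "x \<in> U" "y \<in> U" "x \<noteq> y" "{x, y} \<notin> B" "card (S - {x, y}) = min (card S) 1" for x y
    using that unfolding safe_red_edge_def S_def U_def by blast
  have not_blue: "{x, z} \<notin> B" if "z \<in> U - S" "x \<in> U" "x \<noteq> z" for x z
    using doubleton_notin_blue[OF fin R] that unfolding U_def S_def by blast
  consider "card S = 3" | "card S = 2" | "card S \<le> 1" using S3 by linarith
  thus ?thesis
  proof cases
    case 1
    then obtain x y where xy: "x \<in> S" "y \<in> S" "x \<noteq> y" "{x, y} \<notin> B"
      using exists_pair_notin_of_card_3[OF _ SB] by blast
    have "card (S - {x, y}) = 1" using 1 xy finS by (simp add: card_Diff_subset)
    thus ?thesis using 1 xy SU by (intro safeI) auto
  next
    case 2
    then obtain x y where S: "S = {x, y}" "x \<noteq> y" by (auto simp: card_2_iff)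
    have "card (U - S) \<noteq> 0" using \<open>card (U - S) \<ge> 4 - card S\<close> 2 by linarith
    then obtain z where z: "z \<in> U - S" by (metis card.empty ex_in_conv)
    have "S - {x, z} = {y}" using S z by auto
    thus ?thesis using 2 S z SU not_blue[OF z, of x] by (intro safeI[of x z]) auto
  next
    case 3
    hence "2 \<le> card (U - S)" using \<open>card (U - S) \<ge> 4 - card S\<close> by linarith
    then obtain T where T: "T \<subseteq> U - S" "card T = 2" by (rule obtain_subset_with_card_n)
    then obtain x z where xz: "T = {x, z}" "x \<noteq> z" by (auto simp: card_2_iff)
    have "S - {x, z} = S" using T xz by auto
    thus ?thesis using 3 T xz not_blue[of z x] by (intro safeI[of x z]) auto
  qed
qed

lemma safe_red_edge_step:
  assumes fin: "finite H" and safe: "safe_red_edge H R B e" and R: "R \<subseteq> edges_of H"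
    and M: "is_matching R"
  shows "e \<in> edges_of H" "e \<notin> R" "e \<notin> B" "is_matching (insert e R)"
    "card (distinct_vertices H (insert e R) B) = min (card (distinct_vertices H R B)) 1"
proof -
  from safe obtain x y where xy: "x \<in> H - \<Union>R" "y \<in> H - \<Union>R" "x \<noteq> y" "e = {x, y}"
    and "e \<notin> B" and card: "card (distinct_vertices H R B - e) = min (card (distinct_vertices H R B)) 1"
    unfolding safe_red_edge_def by blast
  show e: "e \<in> edges_of H" using xy by (auto intro: doubleton_in_edges_of)
  show "e \<notin> R" using xy by auto
  show "e \<notin> B" by fact
  show "is_matching (insert e R)" using M xy by (intro is_matching_insert) auto
  show "card (distinct_vertices H (insert e R) B) = min (card (distinct_vertices H R B)) 1"
    using distinct_vertices_insert_red[OF fin e] card by simp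
qed

lemma red_after_0 [simp]: "red_after ms 0 = {}"
  by (simp add: red_after_def)

lemma blue_after_0 [simp]: "blue_after B0 ms 0 = B0"
  by (simp add: blue_after_def)

lemma red_after_Suc:
  "i < length ms \<Longrightarrow>
    red_after ms (Suc i) = (if even i then insert (ms ! i) (red_after ms i) else red_after ms i)"
  unfolding red_after_def by (auto simp: less_Suc_eq)

lemma blue_after_Suc:
  "i < length ms \<Longrightarrow>
    blue_after B0 ms (Suc i) = (if odd i then insert (ms ! i) (blue_after B0 ms i) else blue_after B0 ms i)"
  unfolding blue_after_def by (auto simp: less_Suc_eq)

lemma red_after_take: "i \<le> length ms \<Longrightarrow> red_after (take i ms) i = red_after ms i"
  unfolding red_after_def by (auto simp: min_def) (metis nth_take)

lemma blue_after_take: "i \<le> length ms \<Longrightarrow> blue_after B0 (take i ms) i = blue_after B0 ms i"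
  unfolding blue_after_def by (auto simp: min_def) (metis nth_take)

lemma set_take_subset_claimed: "set (take i ms) \<subseteq> red_after ms i \<union> blue_after B0 ms i"
proof
  fix e assume "e \<in> set (take i ms)"
  then obtain j where "j < i" "j < length ms" "e = ms ! j" by (auto simp: in_set_conv_nth)
  thus "e \<in> red_after ms i \<union> blue_after B0 ms i"
    unfolding red_after_def blue_after_def by (cases "even j") auto
qed

lemma initial_subset_blue_after: "B0 \<subseteq> blue_after B0 ms i"
  by (simp add: blue_after_def)

text \<open>If no safe edge exists (only possible beyond the range of the theorem), the choice is
  arbitrary.\<close>

definition red_strategy :: "'a set \<Rightarrow> 'a set set \<Rightarrow> 'a set list \<Rightarrow> 'a set" where
  "red_strategy H B0 h =
     (SOME e. safe_red_edge H (red_after h (length h)) (blue_after B0 h (length h)) e)"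

locale red_play =
  fixes E :: "'a set set" and H :: "'a set" and B0 :: "'a set set" and ms :: "'a set list"
  assumes finite_H: "finite H"
    and edges_H: "edges_of H \<subseteq> E"
    and initial_blue: "card (B0 \<inter> edges_of H) \<le> 1"
    and red_follows: "\<And>i. i < length ms \<Longrightarrow> even i \<Longrightarrow> ms ! i = red_strategy H B0 (take i ms)"
begin

abbreviation distinct_after :: "nat \<Rightarrow> 'a set" where
  "distinct_after i \<equiv> distinct_vertices H (red_after ms i) (blue_after B0 ms i)"

lemma red_move_step:
  assumes inv: "red_move_invariant H (red_after ms (2 * k)) (blue_after B0 ms (2 * k)) k"
    and len: "2 * k < length ms" and big: "2 * k + 4 \<le> card H"
  shows "legal_move E B0 ms (2 * k)"
    and "red_after ms (2 * k + 1) \<subseteq> edges_of H"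
    and "is_matching (red_after ms (2 * k + 1))"
    and "card (red_after ms (2 * k + 1)) = Suc k"
    and "card (distinct_after (2 * k + 1)) = min (card (distinct_after (2 * k))) 1"
proof -
  let ?R = "red_after ms (2 * k)" and ?B = "blue_after B0 ms (2 * k)"
  have R: "?R \<subseteq> edges_of H" "is_matching ?R" "card ?R = k"
    using inv by (simp_all add: red_move_invariant_def)
  have "ms ! (2 * k) = (SOME e. safe_red_edge H ?R ?B e)"
    using red_follows[OF len] len by (simp add: red_strategy_def red_after_take blue_after_take)
  hence "safe_red_edge H ?R ?B (ms ! (2 * k))"
    using someI_ex[OF safe_red_edge_exists[OF finite_H inv big]] by simp
  note step = safe_red_edge_step[OF finite_H this R(1,2)]
  have red: "red_after ms (2 * k + 1) = insert (ms ! (2 * k)) ?R"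
    and blue: "blue_after B0 ms (2 * k + 1) = ?B"
    using red_after_Suc[OF len] blue_after_Suc[OF len, of B0] by simp_all
  have "finite ?R" using R(1) finite_subset finite_edges_of[OF finite_H] by blast
  show "legal_move E B0 ms (2 * k)"
    unfolding legal_move_def
  proof (intro conjI)
    show "ms ! (2 * k) \<in> E" using step(1) edges_H by blast
    show "ms ! (2 * k) \<notin> B0" using step(3) initial_subset_blue_after[of B0 ms "2 * k"] by blast
    show "ms ! (2 * k) \<notin> set (take (2 * k) ms)"
      using step(2,3) set_take_subset_claimed[of "2 * k" ms B0] by blast
  qed (rule len)
  show "red_after ms (2 * k + 1) \<subseteq> edges_of H" using red step(1) R(1) by simp
  show "is_matching (red_after ms (2 * k + 1))" using red step(4) by simp
  show "card (red_after ms (2 * k + 1)) = Suc k" using red step(2) R(3) \<open>finite ?R\<close> by simp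
  show "card (distinct_after (2 * k + 1)) = min (card (distinct_after (2 * k))) 1"
    using red blue step(5) by simp
qed

lemma blue_move_step:
  assumes "odd i" "i < length ms"
  shows "red_after ms (Suc i) = red_after ms i"
    and "blue_after B0 ms (Suc i) = insert (ms ! i) (blue_after B0 ms i)"
  using assms by (simp_all add: red_after_Suc blue_after_Suc)

lemma red_move_invariant_holds:
  "2 * k \<le> length ms \<Longrightarrow> 2 * k + 2 \<le> card H \<Longrightarrow>
    red_move_invariant H (red_after ms (2 * k)) (blue_after B0 ms (2 * k)) k"
proof (induction k)
  case 0
  show ?case using red_move_invariant_initial[OF finite_H initial_blue] by simp
next
  case (Suc k)
  have len: "2 * k < length ms" and big: "2 * k + 4 \<le> card H" using Suc.prems by simp_all
  have "red_move_invariant H (red_after ms (2 * k)) (blue_after B0 ms (2 * k)) k"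
    using Suc.IH len big by simp
  note step = red_move_step[OF this len big]
  have "card (distinct_after (2 * k + 1)) \<le> 1" using step(5) by simp
  note after_blue = red_move_invariant_after_blue[OF finite_H step(2-4) this]
  have "2 * k + 1 < length ms" "2 * Suc k = Suc (2 * k + 1)" using Suc.prems by simp_all
  thus ?case using after_blue blue_move_step[of "2 * k + 1"] by (simp only:) simp
qed

lemma distinct_after_mono_blue:
  "odd i \<Longrightarrow> i < length ms \<Longrightarrow> distinct_after i \<subseteq> distinct_after (Suc i)"
  by (simp add: blue_move_step distinct_vertices_mono_blue[OF finite_H])

lemma red_move_outcome:
  assumes "2 * k < length ms" and "2 * k + 4 \<le> card H"
  shows "legal_move E B0 ms (2 * k)"
    and "red_after ms (2 * k + 1) \<subseteq> edges_of H"
    and "is_matching (red_after ms (2 * k + 1))"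
    and "card (red_after ms (2 * k + 1)) = Suc k"
    and "card (distinct_after (2 * k + 1)) = min (card (distinct_after (2 * k))) 1"
proof -
  have "red_move_invariant H (red_after ms (2 * k)) (blue_after B0 ms (2 * k)) k"
    using assms by (intro red_move_invariant_holds) simp_all
  from red_move_step[OF this assms] show "legal_move E B0 ms (2 * k)"
    and "red_after ms (2 * k + 1) \<subseteq> edges_of H"
    and "is_matching (red_after ms (2 * k + 1))"
    and "card (red_after ms (2 * k + 1)) = Suc k"
    and "card (distinct_after (2 * k + 1)) = min (card (distinct_after (2 * k))) 1" .
qed

lemma D_Suc_eq: "D H B0 ms (Suc k) = card (distinct_after (2 * k + 1))"
  by (simp add: D_def distinct_vertices_def)

lemma D_le_1: "2 * k < length ms \<Longrightarrow> 2 * k + 4 \<le> card H \<Longrightarrow> D H B0 ms (Suc k) \<le> 1"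
  using red_move_outcome(5) D_Suc_eq by simp

lemma D_Suc_mono:
  assumes "2 * Suc k < length ms" and "2 * Suc k + 4 \<le> card H"
  shows "D H B0 ms (Suc k) \<le> D H B0 ms (Suc (Suc k))"
proof -
  have "distinct_after (2 * k + 1) \<subseteq> distinct_after (2 * Suc k)"
    using distinct_after_mono_blue[of "2 * k + 1"] assms by simp
  hence "card (distinct_after (2 * k + 1)) \<le> card (distinct_after (2 * Suc k))"
    using finite_distinct_vertices[OF finite_H] by (rule card_mono[rotated])
  moreover have "D H B0 ms (Suc k) \<le> 1" using D_le_1[of k] assms by simp
  ultimately show ?thesis
    using red_move_outcome(5)[OF assms] D_Suc_eq[of k] D_Suc_eq[of "Suc k"] by simp
qed

lemma D_stays_1:
  assumes "k \<le> j" and "2 * j < length ms" and "2 * j + 4 \<le> card H"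
    and "D H B0 ms (Suc k) = 1"
  shows "D H B0 ms (Suc j) = 1"
  using assms
proof (induction j rule: dec_induct)
  case (step i)
  have "D H B0 ms (Suc i) \<le> D H B0 ms (Suc (Suc i))" using step.prems by (intro D_Suc_mono) auto
  thus ?case using step D_le_1[of "Suc i"] by simp
qed

end

theorem lemma2p4:
  fixes V :: "'a set" and E :: "'a set set" and H :: "'a set" and n :: nat
    and B0 :: "'a set set"
  assumes "simple_graph V E"
    and "H \<subseteq> V" and "card H = n" and "edges_of H \<subseteq> E"
    and "B0 \<subseteq> E"
    and "\<exists>v\<in>H. \<exists>e\<in>B0. v \<in> e"
    and "card (B0 \<inter> edges_of H) \<le> 1"
  shows "\<exists>\<sigma> :: 'a set list \<Rightarrow> 'a set. \<forall>ms.
     (\<forall>i<length ms. even i \<longrightarrow> ms ! i = \<sigma> (take i ms)) \<and>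
     (\<forall>i<length ms. odd i \<longrightarrow> legal_move E B0 ms i) \<longrightarrow>
       (\<forall>j. 1 \<le> j \<and> real j \<le> real n / 2 - 1 \<and> 2*j - 1 \<le> length ms \<longrightarrow>
           legal_move E B0 ms (2*(j-1)) \<and>
           red_after ms (2*j - 1) \<subseteq> edges_of H \<and>
           is_matching (red_after ms (2*j - 1)) \<and>
           card (red_after ms (2*j - 1)) = j \<and>
           D H B0 ms j \<le> 1) \<and>
       (\<forall>k j. 1 \<le> k \<and> k \<le> j \<and> real j \<le> real n / 2 - 1 \<and> 2*j - 1 \<le> length ms \<and>
           D H B0 ms k = 1 \<longrightarrow> D H B0 ms j = 1)"
proof (rule exI[of _ "red_strategy H B0"], intro allI impI)
  fix ms assume play: "(\<forall>i<length ms. even i \<longrightarrow> ms ! i = red_strategy H B0 (take i ms)) \<and>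
     (\<forall>i<length ms. odd i \<longrightarrow> legal_move E B0 ms i)"
  have range: "2 * j + 2 \<le> n" if "real j \<le> real n / 2 - 1" for j
    using that by linarith
  show "(\<forall>j. 1 \<le> j \<and> real j \<le> real n / 2 - 1 \<and> 2*j - 1 \<le> length ms \<longrightarrow>
           legal_move E B0 ms (2*(j-1)) \<and>
           red_after ms (2*j - 1) \<subseteq> edges_of H \<and>
           is_matching (red_after ms (2*j - 1)) \<and>
           card (red_after ms (2*j - 1)) = j \<and>
           D H B0 ms j \<le> 1) \<and>
       (\<forall>k j. 1 \<le> k \<and> k \<le> j \<and> real j \<le> real n / 2 - 1 \<and> 2*j - 1 \<le> length ms \<and>
           D H B0 ms k = 1 \<longrightarrow> D H B0 ms j = 1)"
  proof (cases "finite H")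
    case False
    hence "n = 0" using assms(3) by simp
    thus ?thesis by auto
  next
    case True
    then interpret red_play E H B0 ms using assms(4,7) play by unfold_locales auto
    show ?thesis
    proof (rule conjI; intro allI impI; elim conjE)
      fix j assume "1 \<le> j" "real j \<le> real n / 2 - 1" "2 * j - 1 \<le> length ms"
      then obtain k where k: "j = Suc k" "2 * k < length ms" "2 * k + 4 \<le> card H"
        using range assms(3) by (cases j) auto
      show "legal_move E B0 ms (2*(j-1)) \<and> red_after ms (2*j - 1) \<subseteq> edges_of H \<and>
          is_matching (red_after ms (2*j - 1)) \<and> card (red_after ms (2*j - 1)) = j \<and>
          D H B0 ms j \<le> 1"
        using red_move_outcome(1-4)[OF k(2,3)] D_le_1[OF k(2,3)] k(1) by simp
    next
      fix k j assume "1 \<le> k" "k \<le> j" "real j \<le> real n / 2 - 1" "2 * j - 1 \<le> length ms"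
        "D H B0 ms k = 1"
      then obtain k' j' where kj: "k = Suc k'" "j = Suc j'" "2 * j' < length ms" "2 * j' + 4 \<le> card H"
        using range assms(3) by (cases k; cases j) auto
      show "D H B0 ms j = 1"
        using D_stays_1[of k' j', OF _ kj(3,4)] kj(1,2) \<open>k \<le> j\<close> \<open>D H B0 ms k = 1\<close> by simp
    qed
  qed
qed

end
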